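(* Let $\rho\in(-1,1)$ and let $\Sigma_\rho=\begin{pmatrix}1&\rho\\ \rho&1\end{pmatrix}$, $\Sigma_{-\rho}=\begin{pmatrix}1&-\rho\\ -\rho&1\end{pmatrix}$. Let $(X_1,Y_2)\sim \mathrm{N}(0,\Sigma_\rho)$ and $(X_2,Y_1)\sim\mathrm{N}(0,\Sigma_{-\rho})$, with the pair $(X_1,Y_2)$ independent of the pair $(X_2,Y_1)$. Then for any $w_1,w_2\ge 0$ with $w_1+w_2=1$, the random variable $w_1\frac{X_1}{Y_1}+w_2\frac{X_2}{Y_2}$ has the standard Cauchy distribution.
   Context: The standard Cauchy distribution is the distribution on $\mathbb{R}$ with density $\frac{1}{\pi(1+z^2)}$. $\mathrm{N}(0,\Sigma)$ denotes the centered bivariate normal distribution with covariance matrix $\Sigma$. *)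

theory Defs
  imports "HOL-Probability.Probability"
begin

text \<open>Density of the centered bivariate normal distribution N(0,Sigma) with covariance
  matrix Sigma = [[s11, s12], [s12, s22]] (assumed positive definite):
  f(x,y) = 1/(2 pi sqrt(det Sigma)) * exp(-1/2 * (x,y) Sigma^-1 (x,y)^T).\<close>
definition binormal_density :: "real \<Rightarrow> real \<Rightarrow> real \<Rightarrow> real \<times> real \<Rightarrow> real" where
  "binormal_density s11 s12 s22 = (\<lambda>(x, y).
     let d = s11 * s22 - s12\<^sup>2 in
     exp (- (s22 * x\<^sup>2 - 2 * s12 * x * y + s11 * y\<^sup>2) / (2 * d)) / (2 * pi * sqrt d))"

definition std_cauchy_density :: "real \<Rightarrow> real" where
  "std_cauchy_density z = 1 / (pi * (1 + z\<^sup>2))"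

end

theory Submission
  imports Defs
begin

text \<open>
  Write \<open>p1 = (X1, Y1)\<close> and \<open>p2 = (X2, Y2)\<close>. The joint density of \<open>(p1, p2)\<close> depends only on
  \<open>|p1|\<^sup>2 + |p2|\<^sup>2\<close> and \<open>det (p1, p2)\<close>, so it is invariant under rotating both planes by a common
  angle \<open>\<theta>\<close>. Such a rotation replaces each ratio \<open>X/Y\<close> by \<open>tan (\<phi> + \<theta>)\<close> where \<open>X/Y = tan \<phi>\<close>.
  Averaging over a uniform \<open>\<theta>\<close>, that is over \<open>tan \<theta>\<close> with the Cauchy law, it therefore suffices
  to show that for fixed angles \<open>\<phi>1, \<phi>2\<close> and a uniform \<open>\<theta>\<close> the variable
  \<open>w1 tan (\<phi>1 + \<theta>) + w2 tan (\<phi>2 + \<theta>)\<close> is standard Cauchy. After the substitution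
  \<open>\<theta> \<mapsto> \<theta> - \<phi>1\<close> this is \<open>w1 u + w2 (c u + s)/(c - s u)\<close> with \<open>u\<close> standard Cauchy, and its
  distribution function is computed explicitly: the event \<open>{\<dots> \<le> z}\<close> is bounded by the pole
  \<open>c/s\<close> and the roots of a quadratic, whose arctangents add up to \<open>arctan z\<close>.
\<close>

section \<open>The standard Cauchy distribution\<close>

definition cauchy_cdf :: "real \<Rightarrow> real" where
  "cauchy_cdf z = 1/2 + arctan z / pi"

abbreviation std_cauchy :: "real measure" where
  "std_cauchy \<equiv> density lborel (\<lambda>x. ennreal (std_cauchy_density x))"

lemma std_cauchy_density_nonneg: "0 \<le> std_cauchy_density x"
  unfolding std_cauchy_density_def by (simp add: add_pos_nonneg)

lemma borel_measurable_std_cauchy_density [measurable]: "std_cauchy_density \<in> borel_measurable borel"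
  unfolding std_cauchy_density_def by measurable

lemma cauchy_cdf_has_real_derivative: "(cauchy_cdf has_real_derivative std_cauchy_density x) (at x)"
proof -
  have "((\<lambda>z. 1/2 + arctan z / pi) has_real_derivative 0 + inverse (1 + x\<^sup>2) / pi) (at x)"
    by (rule DERIV_add[OF DERIV_const DERIV_cdivide[OF DERIV_arctan]])
  then show ?thesis
    unfolding cauchy_cdf_def[abs_def] std_cauchy_density_def by (simp add: field_simps)
qed

lemma cauchy_cdf_at_top: "(cauchy_cdf \<longlongrightarrow> 1) at_top"
proof -
  have "((\<lambda>z. 1/2 + arctan z / pi) \<longlongrightarrow> 1/2 + (pi/2) / pi) at_top"
    by (intro tendsto_intros tendsto_arctan_at_top) auto
  then show ?thesis by (simp add: cauchy_cdf_def[abs_def])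
qed

lemma cauchy_cdf_bounds: "0 < cauchy_cdf z" "cauchy_cdf z < 1"
  using arctan_bounded[of z] by (simp_all add: cauchy_cdf_def field_simps)

lemma cauchy_cdf_mono: "x \<le> y \<Longrightarrow> cauchy_cdf x \<le> cauchy_cdf y"
  by (simp add: cauchy_cdf_def divide_right_mono arctan_le_iff)

lemma cauchy_cdf_minus: "cauchy_cdf (- z) = 1 - cauchy_cdf z"
  by (simp add: cauchy_cdf_def arctan_minus)

lemma emeasure_std_cauchy_atLeast: "emeasure std_cauchy {a..} = ennreal (1 - cauchy_cdf a)"
proof -
  have "emeasure std_cauchy {a..} = (\<integral>\<^sup>+x. ennreal (std_cauchy_density x) * indicator {a..} x \<partial>lborel)"
    by (subst emeasure_density) auto
  also have "\<dots> = ennreal (1 - cauchy_cdf a)"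
    by (rule nn_integral_FTC_atLeast[OF _ cauchy_cdf_has_real_derivative std_cauchy_density_nonneg
          cauchy_cdf_at_top]) simp
  finally show ?thesis .
qed

lemma emeasure_std_cauchy_atMost: "emeasure std_cauchy {..b} = ennreal (cauchy_cdf b)"
proof -
  have "emeasure std_cauchy {..b} = (\<integral>\<^sup>+x. ennreal (std_cauchy_density x) * indicator {..b} x \<partial>lborel)"
    by (subst emeasure_density) auto
  also have "\<dots> = (\<integral>\<^sup>+x. ennreal (std_cauchy_density (0 + -1 * x)) * indicator {..b} (0 + -1 * x) \<partial>lborel)"
    by (subst nn_integral_real_affine[where c="-1" and t=0]) auto
  also have "\<dots> = (\<integral>\<^sup>+x. ennreal (std_cauchy_density x) * indicator {-b..} x \<partial>lborel)"
    by (auto intro!: nn_integral_cong simp: std_cauchy_density_def indicator_def)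
  also have "\<dots> = ennreal (cauchy_cdf b)"
    using emeasure_std_cauchy_atLeast[of "-b"] by (simp add: emeasure_density cauchy_cdf_minus)
  finally show ?thesis .
qed

lemma emeasure_std_cauchy_cong_off_point:
  assumes "A \<in> sets borel" "B \<in> sets borel"
    and "\<And>x. x < p \<Longrightarrow> x \<in> A \<longleftrightarrow> x \<in> B" "\<And>x. p < x \<Longrightarrow> x \<in> A \<longleftrightarrow> x \<in> B"
  shows "emeasure std_cauchy A = emeasure std_cauchy B"
proof (rule emeasure_eq_AE)
  have "x \<in> A \<longleftrightarrow> x \<in> B" if "x \<noteq> p" for x
    using that assms(3,4) by (cases "x < p") auto
  then show "AE x in std_cauchy. (x \<in> A) = (x \<in> B)"
    using AE_lborel_singleton[of p] by (subst AE_density) (auto elim!: eventually_mono)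
qed (use assms in auto)

lemma emeasure_std_cauchy_greaterThan: "emeasure std_cauchy {a<..} = ennreal (1 - cauchy_cdf a)"
  by (subst emeasure_std_cauchy_cong_off_point[of _ "{a..}" a]) (auto simp: emeasure_std_cauchy_atLeast)

lemma prob_space_std_cauchy: "prob_space std_cauchy"
proof
  have "emeasure std_cauchy UNIV = emeasure std_cauchy ({..0} \<union> {0<..})"
    by (rule arg_cong[where f="emeasure std_cauchy"]) auto
  also have "\<dots> = emeasure std_cauchy {..0} + emeasure std_cauchy {0<..}"
    by (rule plus_emeasure[symmetric]) auto
  also have "\<dots> = 1"
    using cauchy_cdf_bounds[of 0]
    by (simp add: emeasure_std_cauchy_atMost emeasure_std_cauchy_greaterThan flip: ennreal_plus)
  finally show "emeasure std_cauchy (space std_cauchy) = 1" by simp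
qed

lemma real_distribution_std_cauchy: "real_distribution std_cauchy"
  using prob_space_std_cauchy by (simp add: real_distribution_def real_distribution_axioms_def)

lemma emeasure_std_cauchy_greaterThanAtMost:
  assumes "a \<le> b"
  shows "emeasure std_cauchy {a<..b} = ennreal (cauchy_cdf b - cauchy_cdf a)"
proof -
  interpret prob_space std_cauchy by (rule prob_space_std_cauchy)
  have "emeasure std_cauchy {a<..b} = emeasure std_cauchy ({..b} - {..a})"
    by (rule arg_cong[where f="emeasure std_cauchy"]) auto
  also have "\<dots> = emeasure std_cauchy {..b} - emeasure std_cauchy {..a}"
    using assms by (intro emeasure_Diff emeasure_finite) auto
  also have "\<dots> = ennreal (cauchy_cdf b - cauchy_cdf a)"
    by (simp add: emeasure_std_cauchy_atMost ennreal_minus less_imp_le[OF cauchy_cdf_bounds(1)])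
  finally show ?thesis .
qed

lemma std_cauchy_eqI:
  assumes "real_distribution N" and "\<And>z. emeasure N {..z} = ennreal (cauchy_cdf z)"
  shows "N = std_cauchy"
proof (rule cdf_unique[OF assms(1) real_distribution_std_cauchy])
  have "measure N {..z} = cauchy_cdf z" "measure std_cauchy {..z} = cauchy_cdf z" for z
    using assms(2) emeasure_std_cauchy_atMost cauchy_cdf_bounds(1)
    by (simp_all add: measure_def less_imp_le)
  then show "cdf N = cdf std_cauchy" by (simp add: cdf_def fun_eq_iff)
qed

section \<open>Arctangent identities\<close>

lemma arctan_eqI:
  assumes "-(pi/2) < A" "A < pi/2" "sin A = z * cos A"
  shows "arctan z = A"
proof -
  have "cos A > 0" using assms by (intro cos_gt_zero_pi) auto
  then have "tan A = z" using assms(3) by (simp add: tan_def)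
  then show ?thesis using arctan_tan[OF assms(1,2)] by simp
qed

lemma sqrt_one_plus_square_pos: "sqrt (1 + x\<^sup>2) > 0"
  by (simp add: add_pos_nonneg)

lemma sin_cos_arctan_diff:
  fixes x y :: real
  defines "n \<equiv> sqrt (1 + x\<^sup>2) * sqrt (1 + y\<^sup>2)"
  shows "sin (arctan x - arctan y) * n = x - y"
    and "cos (arctan x - arctan y) * n = 1 + x * y"
proof -
  define p where "p = sqrt (1 + x\<^sup>2)"
  define q where "q = sqrt (1 + y\<^sup>2)"
  have pq: "p \<noteq> 0" "q \<noteq> 0"
    unfolding p_def q_def using sqrt_one_plus_square_pos by (metis less_irrefl)+
  have e: "cos (arctan x) = 1/p" "sin (arctan x) = x/p" "cos (arctan y) = 1/q" "sin (arctan y) = y/q"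
    unfolding p_def q_def by (simp_all add: cos_arctan sin_arctan)
  show "sin (arctan x - arctan y) * n = x - y" "cos (arctan x - arctan y) * n = 1 + x * y"
    unfolding n_def p_def[symmetric] q_def[symmetric] using pq
    by (simp_all add: sin_diff cos_diff e field_simps)
qed

lemma sin_cos_arctan_add_diff:
  fixes x y w :: real
  defines "n \<equiv> sqrt (1 + x\<^sup>2) * sqrt (1 + y\<^sup>2) * sqrt (1 + w\<^sup>2)"
  shows "sin (arctan x + arctan y - arctan w) * n = (x + y) - (1 - x * y) * w"
    and "cos (arctan x + arctan y - arctan w) * n = (1 - x * y) + (x + y) * w"
proof -
  define p where "p = sqrt (1 + x\<^sup>2)"
  define q where "q = sqrt (1 + y\<^sup>2)"
  define r where "r = sqrt (1 + w\<^sup>2)"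
  have pqr: "p \<noteq> 0" "q \<noteq> 0" "r \<noteq> 0"
    unfolding p_def q_def r_def using sqrt_one_plus_square_pos by (metis less_irrefl)+
  have e: "cos (arctan x) = 1/p" "sin (arctan x) = x/p" "cos (arctan y) = 1/q" "sin (arctan y) = y/q"
    "cos (arctan w) = 1/r" "sin (arctan w) = w/r"
    unfolding p_def q_def r_def by (simp_all add: cos_arctan sin_arctan)
  show "sin (arctan x + arctan y - arctan w) * n = (x + y) - (1 - x * y) * w"
    "cos (arctan x + arctan y - arctan w) * n = (1 - x * y) + (x + y) * w"
    unfolding n_def p_def[symmetric] q_def[symmetric] r_def[symmetric] using pqr
    by (simp_all add: sin_diff cos_diff sin_add cos_add e field_simps)
qed

lemma arctan_diff_eq_pm_half_pi:
  fixes x y z :: real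
  assumes "1 + x * y = z * (y - x)"
  shows "x < y \<Longrightarrow> arctan z = arctan x - arctan y + pi/2"
    and "y < x \<Longrightarrow> arctan z = arctan x - arctan y - pi/2"
proof -
  define n where "n = sqrt (1 + x\<^sup>2) * sqrt (1 + y\<^sup>2)"
  define D where "D = arctan x - arctan y"
  have n: "n > 0" unfolding n_def using sqrt_one_plus_square_pos by (intro mult_pos_pos)
  have sc: "sin D * n = x - y" "cos D * n = 1 + x * y"
    using sin_cos_arctan_diff[of x y] unfolding n_def D_def by simp_all
  have bounds: "-(pi/2) < arctan x" "arctan x < pi/2" "-(pi/2) < arctan y" "arctan y < pi/2"
    by (rule arctan_lbound arctan_ubound)+
  show "arctan z = arctan x - arctan y + pi/2" if "x < y"
  proof (rule arctan_eqI)
    have "sin (D + pi/2) = cos D" "cos (D + pi/2) = - sin D" by (simp_all add: sin_add cos_add)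
    then have "sin (D + pi/2) * n = z * (cos (D + pi/2) * n)" using assms sc by simp
    then show "sin (arctan x - arctan y + pi/2) = z * cos (arctan x - arctan y + pi/2)"
      using n unfolding D_def by simp
  qed (use that bounds arctan_less_iff[of x y] in linarith)+
  show "arctan z = arctan x - arctan y - pi/2" if "y < x"
  proof (rule arctan_eqI)
    have shift: "sin (D - pi/2) = - cos D" "cos (D - pi/2) = sin D" by (simp_all add: sin_diff cos_diff)
    have "sin (D - pi/2) * n = - (1 + x * y)" using shift sc by simp
    also have "\<dots> = z * (x - y)" using assms by (simp add: algebra_simps)
    finally have "sin (D - pi/2) * n = z * (cos (D - pi/2) * n)" using shift sc by simp
    then show "sin (arctan x - arctan y - pi/2) = z * cos (arctan x - arctan y - pi/2)"
      using n unfolding D_def by simp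
  qed (use that bounds arctan_less_iff[of y x] in linarith)+
qed

lemma arctan_add_diff_eqI:
  fixes x y w z :: real
  assumes "x < w" "w < y" and "(x + y) - (1 - x * y) * w = z * ((1 - x * y) + (x + y) * w)"
  shows "arctan z = arctan x + arctan y - arctan w"
proof (rule arctan_eqI)
  define n where "n = sqrt (1 + x\<^sup>2) * sqrt (1 + y\<^sup>2) * sqrt (1 + w\<^sup>2)"
  have n: "n > 0" unfolding n_def using sqrt_one_plus_square_pos by (intro mult_pos_pos)
  have "sin (arctan x + arctan y - arctan w) * n = z * (cos (arctan x + arctan y - arctan w) * n)"
    using assms(3) sin_cos_arctan_add_diff[of x y w, folded n_def] by simp
  then show "sin (arctan x + arctan y - arctan w) = z * cos (arctan x + arctan y - arctan w)"
    using n by simp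
  have "-(pi/2) < arctan x" "arctan x < pi/2" "-(pi/2) < arctan y" "arctan y < pi/2"
    by (rule arctan_lbound arctan_ubound)+
  then show "-(pi/2) < arctan x + arctan y - arctan w" "arctan x + arctan y - arctan w < pi/2"
    using assms(1,2) arctan_less_iff[of x w] arctan_less_iff[of w y] by linarith+
qed

section \<open>Moebius maps of rotations preserve the Cauchy law\<close>

text \<open>With \<open>u = tan \<theta>\<close> and \<open>(c, s) = r (cos \<phi>, sin \<phi>)\<close> one has
  \<open>moebius_rot c s u = tan (\<theta> + \<phi>)\<close>.\<close>
definition moebius_rot :: "real \<Rightarrow> real \<Rightarrow> real \<Rightarrow> real" where
  "moebius_rot c s u = (c * u + s) / (c - s * u)"

lemma borel_measurable_moebius_rot [measurable]: "moebius_rot c s \<in> borel_measurable borel"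
  unfolding moebius_rot_def[abs_def] by measurable

lemma moebius_rot_uminus: "moebius_rot (- c) (- s) u = moebius_rot c s u"
proof -
  have "(- c) * u + (- s) = - (c * u + s)" "(- c) - (- s) * u = - (c - s * u)" by simp_all
  then show ?thesis unfolding moebius_rot_def by (simp only: minus_divide_divide)
qed

lemma moebius_rot_0: "c \<noteq> 0 \<Longrightarrow> moebius_rot c 0 u = u"
  by (simp add: moebius_rot_def)

lemma moebius_rot_le_iff:
  assumes "s > 0"
  shows "u < c / s \<Longrightarrow> moebius_rot c s u \<le> z \<longleftrightarrow> (c + z * s) * u \<le> z * c - s"
    and "c / s < u \<Longrightarrow> moebius_rot c s u \<le> z \<longleftrightarrow> z * c - s \<le> (c + z * s) * u"
proof -
  assume "u < c / s"
  then have "0 < c - s * u" using assms by (simp add: field_simps)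
  then show "moebius_rot c s u \<le> z \<longleftrightarrow> (c + z * s) * u \<le> z * c - s"
    by (simp add: moebius_rot_def pos_divide_le_eq algebra_simps)
next
  assume "c / s < u"
  then have "c - s * u < 0" using assms by (simp add: field_simps)
  then show "moebius_rot c s u \<le> z \<longleftrightarrow> z * c - s \<le> (c + z * s) * u"
    by (simp add: moebius_rot_def neg_divide_le_eq algebra_simps)
qed

text \<open>\<open>moebius_rot c (- s)\<close> inverts \<open>moebius_rot c s\<close>, whose pole is \<open>c / s\<close>.\<close>
lemma moebius_rot_inverse_pole:
  assumes "s \<noteq> 0" "c + z * s \<noteq> 0"
  defines "u0 \<equiv> c / s" and "us \<equiv> moebius_rot c (- s) z"
  shows "u0 - us = (c\<^sup>2 + s\<^sup>2) / (s * (c + z * s))" and "1 + us * u0 = z * (u0 - us)"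
  using assms by (simp_all add: moebius_rot_def divide_simps) (simp_all add: algebra_simps power2_eq_square)

lemma emeasure_std_cauchy_moebius_rot_le:
  assumes s: "s > 0"
  shows "emeasure std_cauchy {u. moebius_rot c s u \<le> z} = ennreal (cauchy_cdf z)"
proof -
  define u0 where "u0 = c / s"
  define k where "k = c + z * s"
  define us where "us = moebius_rot c (- s) z"
  note le_iff = moebius_rot_le_iff[OF s, where c=c and z=z, folded u0_def k_def]
  have us: "us = (z * c - s) / k" by (simp add: us_def k_def moebius_rot_def algebra_simps)
  have "0 < c\<^sup>2 + s\<^sup>2" using s by (simp add: add_nonneg_pos)
  have [measurable]: "{u. moebius_rot c s u \<le> z} \<in> sets borel" by measurable
  consider "k > 0" | "k < 0" | "k = 0" by linarith
  then show ?thesis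
  proof cases
    assume k: "k > 0"
    have "0 < (c\<^sup>2 + s\<^sup>2) / (s * k)" using s k \<open>0 < c\<^sup>2 + s\<^sup>2\<close> by simp
    then have "us < u0" using moebius_rot_inverse_pole(1)[of s c z] s k by (simp add: u0_def us_def k_def)
    have "moebius_rot c s u \<le> z \<longleftrightarrow> u \<le> us" if "u < u0" for u
      using le_iff(1)[OF that] k by (simp add: us pos_le_divide_eq mult.commute)
    moreover have "moebius_rot c s u \<le> z" if "u0 < u" for u
      using le_iff(2)[OF that] k less_trans[OF \<open>us < u0\<close> that]
      by (simp add: us pos_divide_less_eq mult.commute)
    ultimately have "emeasure std_cauchy {u. moebius_rot c s u \<le> z} = emeasure std_cauchy ({..us} \<union> {u0<..})"
      using \<open>us < u0\<close> by (intro emeasure_std_cauchy_cong_off_point[where p=u0]) auto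
    also have "\<dots> = emeasure std_cauchy {..us} + emeasure std_cauchy {u0<..}"
      using \<open>us < u0\<close> by (intro plus_emeasure[symmetric]) auto
    also have "\<dots> = ennreal (cauchy_cdf us + (1 - cauchy_cdf u0))"
      using cauchy_cdf_bounds[of us] cauchy_cdf_bounds[of u0]
      by (simp add: emeasure_std_cauchy_atMost emeasure_std_cauchy_greaterThan flip: ennreal_plus)
    also have "cauchy_cdf us + (1 - cauchy_cdf u0) = cauchy_cdf z"
      using arctan_diff_eq_pm_half_pi(1)[OF moebius_rot_inverse_pole(2) \<open>us < u0\<close>[unfolded us_def u0_def]] s k
      by (simp add: cauchy_cdf_def add_divide_distrib diff_divide_distrib us_def u0_def k_def)
    finally show ?thesis .
  next
    assume k: "k < 0"
    have "(c\<^sup>2 + s\<^sup>2) / (s * k) < 0"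
      using s k \<open>0 < c\<^sup>2 + s\<^sup>2\<close> by (simp add: divide_pos_neg mult_pos_neg)
    then have "u0 < us" using moebius_rot_inverse_pole(1)[of s c z] s k by (simp add: u0_def us_def k_def)
    have "\<not> moebius_rot c s u \<le> z" if "u < u0" for u
      using le_iff(1)[OF that] k less_trans[OF that \<open>u0 < us\<close>]
      by (simp add: us neg_less_divide_eq mult.commute)
    moreover have "moebius_rot c s u \<le> z \<longleftrightarrow> u \<le> us" if "u0 < u" for u
      using le_iff(2)[OF that] k by (simp add: us neg_le_divide_eq mult.commute)
    ultimately have "emeasure std_cauchy {u. moebius_rot c s u \<le> z} = emeasure std_cauchy {u0<..us}"
      by (intro emeasure_std_cauchy_cong_off_point[where p=u0]) auto
    also have "\<dots> = ennreal (cauchy_cdf us - cauchy_cdf u0)"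
      using \<open>u0 < us\<close> by (simp add: emeasure_std_cauchy_greaterThanAtMost)
    also have "cauchy_cdf us - cauchy_cdf u0 = cauchy_cdf z"
      using arctan_diff_eq_pm_half_pi(2)[OF moebius_rot_inverse_pole(2) \<open>u0 < us\<close>[unfolded us_def u0_def]] s k
      by (simp add: cauchy_cdf_def add_divide_distrib diff_divide_distrib us_def u0_def k_def)
    finally show ?thesis .
  next
    assume k: "k = 0"
    then have z: "z = - u0" using s by (simp add: k_def u0_def field_simps)
    have "z * c - s < 0"
      using s \<open>0 < c\<^sup>2 + s\<^sup>2\<close> unfolding z u0_def by (simp add: field_simps power2_eq_square)
    then have "emeasure std_cauchy {u. moebius_rot c s u \<le> z} = emeasure std_cauchy {u0<..}"
      using k le_iff by (intro emeasure_std_cauchy_cong_off_point[where p=u0]) auto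
    then show ?thesis by (simp add: emeasure_std_cauchy_greaterThan z cauchy_cdf_minus)
  qed
qed

lemma quadratic_roots_around:
  fixes A B C p :: real
  assumes A: "A > 0" and neg: "A * p\<^sup>2 + B * p + C < 0"
  obtains x1 x2 where "x1 < p" "p < x2" "\<And>x. A * x\<^sup>2 + B * x + C = A * ((x - x1) * (x - x2))"
    "x1 + x2 = - B / A" "x1 * x2 = C / A"
proof -
  define r where "r = sqrt (B\<^sup>2 - 4 * A * C)"
  have "B\<^sup>2 - 4 * A * C = (2 * A * p + B)\<^sup>2 - 4 * A * (A * p\<^sup>2 + B * p + C)"
    by (simp add: algebra_simps power2_eq_square)
  also have "\<dots> > 0"
    using mult_pos_neg[of "4 * A", OF _ neg] A zero_le_power2[of "2 * A * p + B"] by linarith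
  finally have r: "r > 0" "r * r = B * B - 4 * A * C"
    unfolding r_def by (simp_all flip: power2_eq_square)
  define x1 where "x1 = (- B - r) / (2 * A)"
  define x2 where "x2 = (- B + r) / (2 * A)"
  have factor: "A * x\<^sup>2 + B * x + C = A * ((x - x1) * (x - x2))" for x
    using A by (simp add: x1_def x2_def field_simps power2_eq_square r(2))
  have "x1 < x2" using A r(1) by (simp add: x1_def x2_def divide_strict_right_mono)
  moreover have "(p - x1) * (p - x2) < 0"
    using neg factor[of p] A by (simp add: mult_less_0_iff)
  ultimately have "x1 < p" "p < x2" by (auto simp: mult_less_0_iff)
  moreover have "x1 + x2 = - B / A" using A by (simp add: x1_def x2_def field_simps)
  moreover have "x1 * x2 = C / A"
    using A by (simp add: x1_def x2_def field_simps r(2))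
  ultimately show ?thesis using factor that by blast
qed

lemma convex_moebius_rot_le_iff:
  fixes a b c s z :: real
  assumes s: "s > 0" and ab: "a + b = 1"
  defines "Q \<equiv> \<lambda>u. (a * s) * u\<^sup>2 + (- (c + z * s)) * u + (z * c - b * s)"
  shows "u < c / s \<Longrightarrow> a * u + b * moebius_rot c s u \<le> z \<longleftrightarrow> 0 \<le> Q u"
    and "c / s < u \<Longrightarrow> a * u + b * moebius_rot c s u \<le> z \<longleftrightarrow> Q u \<le> 0"
    and "Q (c / s) = - b * (c\<^sup>2 + s\<^sup>2) / s"
proof -
  have b: "b = 1 - a" using ab by simp
  have combination: "a * u + b * moebius_rot c s u \<le> z \<longleftrightarrow> - Q u / (c - s * u) \<le> 0"
    if "c - s * u \<noteq> 0" for u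
  proof -
    have "a * u + b * moebius_rot c s u - z = - Q u / (c - s * u)"
      using that by (simp add: b moebius_rot_def Q_def field_simps power2_eq_square)
    then show ?thesis by (metis diff_le_0_iff_le)
  qed
  show "a * u + b * moebius_rot c s u \<le> z \<longleftrightarrow> 0 \<le> Q u" if "u < c / s"
  proof -
    have "0 < c - s * u" using that s by (simp add: field_simps)
    then show ?thesis using combination[of u] by (simp add: zero_le_divide_iff)
  qed
  show "a * u + b * moebius_rot c s u \<le> z \<longleftrightarrow> Q u \<le> 0" if "c / s < u"
  proof -
    have "c - s * u < 0" using that s by (simp add: field_simps)
    then show ?thesis using combination[of u] by (auto simp: zero_le_divide_iff)
  qed
  show "Q (c / s) = - b * (c\<^sup>2 + s\<^sup>2) / s"
    using s by (simp add: b Q_def field_simps power2_eq_square)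
qed

lemma emeasure_std_cauchy_convex_moebius_rot_le_pos:
  assumes a: "a > 0" and b: "b > 0" and ab: "a + b = 1" and s: "s > 0"
  shows "emeasure std_cauchy {u. a * u + b * moebius_rot c s u \<le> z} = ennreal (cauchy_cdf z)"
proof -
  have "b = 1 - a" using ab by simp
  define u0 where "u0 = c / s"
  define Q where "Q u = (a * s) * u\<^sup>2 + (- (c + z * s)) * u + (z * c - b * s)" for u
  note le_iff = convex_moebius_rot_le_iff[OF s ab, where c=c and z=z, folded u0_def Q_def]
  have "- b * (c\<^sup>2 + s\<^sup>2) / s < 0" using b s by (simp add: add_nonneg_pos divide_neg_pos)
  then have "Q u0 < 0" using le_iff(3) by simp
  then obtain u1 u2 where u12: "u1 < u0" "u0 < u2"
    and factor: "\<And>u. Q u = (a * s) * ((u - u1) * (u - u2))"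
    and vieta: "u1 + u2 = (c + z * s) / (a * s)" "u1 * u2 = (z * c - b * s) / (a * s)"
    using quadratic_roots_around[where A="a * s" and B="- (c + z * s)" and C="z * c - b * s" and p=u0] a s
    unfolding Q_def by (auto simp: ac_simps)
  have "0 < a * s" using a s by simp
  have sign: "0 \<le> Q u \<longleftrightarrow> 0 \<le> (u - u1) * (u - u2)" "Q u \<le> 0 \<longleftrightarrow> (u - u1) * (u - u2) \<le> 0" for u
    using mult_le_cancel_left_pos[OF \<open>0 < a * s\<close>, of 0 "(u - u1) * (u - u2)"]
      mult_le_cancel_left_pos[OF \<open>0 < a * s\<close>, of "(u - u1) * (u - u2)" 0]
    by (simp_all add: factor)
  have [measurable]: "{u. a * u + b * moebius_rot c s u \<le> z} \<in> sets borel" by measurable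
  have "a * u + b * moebius_rot c s u \<le> z \<longleftrightarrow> u \<le> u1" if "u < u0" for u
    using le_iff(1)[OF that] sign u12 that by (auto simp: zero_le_mult_iff)
  moreover have "a * u + b * moebius_rot c s u \<le> z \<longleftrightarrow> u \<le> u2" if "u0 < u" for u
    using le_iff(2)[OF that] sign u12 that by (auto simp: mult_le_0_iff)
  ultimately have "emeasure std_cauchy {u. a * u + b * moebius_rot c s u \<le> z}
      = emeasure std_cauchy ({..u1} \<union> {u0<..u2})"
    using u12 by (intro emeasure_std_cauchy_cong_off_point[where p=u0]) auto
  also have "\<dots> = emeasure std_cauchy {..u1} + emeasure std_cauchy {u0<..u2}"
    using u12 by (intro plus_emeasure[symmetric]) auto
  also have "\<dots> = ennreal (cauchy_cdf u1 + (cauchy_cdf u2 - cauchy_cdf u0))"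
    using u12 cauchy_cdf_bounds[of u1] cauchy_cdf_mono[of u0 u2]
    by (simp add: emeasure_std_cauchy_atMost emeasure_std_cauchy_greaterThanAtMost flip: ennreal_plus)
  also have "cauchy_cdf u1 + (cauchy_cdf u2 - cauchy_cdf u0) = cauchy_cdf z"
  proof -
    have "(u1 + u2) - (1 - u1 * u2) * u0 = z * ((1 - u1 * u2) + (u1 + u2) * u0)"
      unfolding vieta using a s by (simp add: \<open>b = 1 - a\<close> u0_def field_simps)
    then have "arctan z = arctan u1 + arctan u2 - arctan u0"
      using u12 by (intro arctan_add_diff_eqI)
    then show ?thesis by (simp add: cauchy_cdf_def add_divide_distrib diff_divide_distrib)
  qed
  finally show ?thesis .
qed

lemma emeasure_std_cauchy_convex_moebius_rot_le:
  assumes a: "a \<ge> 0" and b: "b \<ge> 0" and ab: "a + b = 1" and cs: "c \<noteq> 0 \<or> s \<noteq> 0"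
  shows "emeasure std_cauchy {u. a * u + b * moebius_rot c s u \<le> z} = ennreal (cauchy_cdf z)"
proof -
  have pos: "emeasure std_cauchy {u. a * u + b * moebius_rot c s u \<le> z} = ennreal (cauchy_cdf z)"
    if "s > 0" for c s
  proof -
    consider "b = 0" | "a = 0" | "a > 0" "b > 0" using a b by linarith
    then show ?thesis
    proof cases
      assume "b = 0"
      then show ?thesis using ab emeasure_std_cauchy_atMost[of z] by (simp add: atMost_def)
    next
      assume "a = 0"
      then show ?thesis using ab emeasure_std_cauchy_moebius_rot_le[OF that] by simp
    qed (rule emeasure_std_cauchy_convex_moebius_rot_le_pos[OF _ _ ab that])
  qed
  consider "s = 0" | "s > 0" | "s < 0" by linarith
  then show ?thesis
  proof cases
    assume "s = 0"
    then have "a * u + b * moebius_rot c s u = u" for u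
      using cs ab by (simp add: moebius_rot_0 flip: distrib_right)
    then show ?thesis using emeasure_std_cauchy_atMost[of z] by (simp add: atMost_def)
  next
    assume "s < 0"
    then show ?thesis using pos[of "- s" "- c"] by (simp add: moebius_rot_uminus)
  qed (rule pos)
qed

lemma distr_std_cauchy_moebius_rot:
  assumes "c \<noteq> 0 \<or> s \<noteq> 0"
  shows "distr std_cauchy borel (moebius_rot c s) = std_cauchy"
proof (rule std_cauchy_eqI)
  show "real_distribution (distr std_cauchy borel (moebius_rot c s))"
    by (rule prob_space.real_distribution_distr[OF prob_space_std_cauchy]) simp
  fix z
  have "emeasure (distr std_cauchy borel (moebius_rot c s)) {..z}
      = emeasure std_cauchy {u. 0 * u + 1 * moebius_rot c s u \<le> z}"
    by (subst emeasure_distr) (auto intro!: arg_cong[where f="emeasure std_cauchy"])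
  also have "\<dots> = ennreal (cauchy_cdf z)"
    using assms by (intro emeasure_std_cauchy_convex_moebius_rot_le) auto
  finally show "emeasure (distr std_cauchy borel (moebius_rot c s)) {..z} = ennreal (cauchy_cdf z)" .
qed

text \<open>The second map is the first one followed by the rotation through the difference of the angles.\<close>
lemma moebius_rot_eq_compose:
  assumes pole: "c1 - s1 * t \<noteq> 0" and cs1: "c1 \<noteq> 0 \<or> s1 \<noteq> 0"
  shows "moebius_rot c2 s2 t = moebius_rot (c1 * c2 + s1 * s2) (c1 * s2 - s1 * c2) (moebius_rot c1 s1 t)"
proof -
  define C where "C = c1 * c2 + s1 * s2"
  define S where "S = c1 * s2 - s1 * c2"
  define n where "n = c1\<^sup>2 + s1\<^sup>2"
  have "n \<noteq> 0" using cs1 unfolding n_def by (auto simp: add_pos_nonneg add_nonneg_pos)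
  have "C * moebius_rot c1 s1 t + S = (C * (c1 * t + s1) + S * (c1 - s1 * t)) / (c1 - s1 * t)"
    using pole by (simp add: moebius_rot_def divide_add_eq_iff)
  also have "C * (c1 * t + s1) + S * (c1 - s1 * t) = n * (c2 * t + s2)"
    unfolding C_def S_def n_def by algebra
  finally have num: "C * moebius_rot c1 s1 t + S = n * (c2 * t + s2) / (c1 - s1 * t)" .
  have "C - S * moebius_rot c1 s1 t = (C * (c1 - s1 * t) - S * (c1 * t + s1)) / (c1 - s1 * t)"
    using pole by (simp add: moebius_rot_def diff_divide_eq_iff)
  also have "C * (c1 - s1 * t) - S * (c1 * t + s1) = n * (c2 - s2 * t)"
    unfolding C_def S_def n_def by algebra
  finally have den: "C - S * moebius_rot c1 s1 t = n * (c2 - s2 * t) / (c1 - s1 * t)" .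
  have "moebius_rot C S (moebius_rot c1 s1 t) = (n * (c2 * t + s2)) / (n * (c2 - s2 * t))"
    unfolding moebius_rot_def[of C] num den using pole by (simp add: divide_divide_eq_left')
  also have "\<dots> = moebius_rot c2 s2 t"
    using \<open>n \<noteq> 0\<close> by (simp add: moebius_rot_def)
  finally show ?thesis unfolding C_def S_def by simp
qed

lemma emeasure_std_cauchy_convex_two_moebius_rot_le:
  assumes a: "a \<ge> 0" and b: "b \<ge> 0" and ab: "a + b = 1"
    and cs1: "c1 \<noteq> 0 \<or> s1 \<noteq> 0" and cs2: "c2 \<noteq> 0 \<or> s2 \<noteq> 0"
  shows "emeasure std_cauchy {t. a * moebius_rot c1 s1 t + b * moebius_rot c2 s2 t \<le> z}
    = ennreal (cauchy_cdf z)"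
proof -
  define C where "C = c1 * c2 + s1 * s2"
  define S where "S = c1 * s2 - s1 * c2"
  define H where "H u = a * u + b * moebius_rot C S u" for u
  have "C\<^sup>2 + S\<^sup>2 = (c1\<^sup>2 + s1\<^sup>2) * (c2\<^sup>2 + s2\<^sup>2)" unfolding C_def S_def by algebra
  moreover have "c1\<^sup>2 + s1\<^sup>2 > 0" "c2\<^sup>2 + s2\<^sup>2 > 0"
    using cs1 cs2 by (auto simp: add_pos_nonneg add_nonneg_pos)
  ultimately have CS: "C \<noteq> 0 \<or> S \<noteq> 0" by auto
  have [measurable]: "H \<in> borel_measurable borel" unfolding H_def by measurable
  have "moebius_rot c2 s2 t = moebius_rot C S (moebius_rot c1 s1 t)" if "t \<noteq> c1 / s1" for t
  proof -
    have "c1 - s1 * t \<noteq> 0" using that cs1 by (cases "s1 = 0") (auto simp: field_simps)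
    then show ?thesis unfolding C_def S_def by (rule moebius_rot_eq_compose[OF _ cs1])
  qed
  then have "emeasure std_cauchy {t. a * moebius_rot c1 s1 t + b * moebius_rot c2 s2 t \<le> z}
      = emeasure std_cauchy {t. H (moebius_rot c1 s1 t) \<le> z}"
    by (intro emeasure_std_cauchy_cong_off_point[where p="c1 / s1"]) (auto simp: H_def)
  also have "\<dots> = emeasure (distr std_cauchy borel (moebius_rot c1 s1)) {u. H u \<le> z}"
    by (subst emeasure_distr) (auto intro!: arg_cong[where f="emeasure std_cauchy"])
  also have "\<dots> = ennreal (cauchy_cdf z)"
    unfolding distr_std_cauchy_moebius_rot[OF cs1] H_def
    by (rule emeasure_std_cauchy_convex_moebius_rot_le[OF a b ab CS])
  finally show ?thesis .
qed

section \<open>Rotation invariance of Lebesgue measure on the plane\<close>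

lemma nn_integral_lborel_pair_shear_fst:
  fixes h :: "real \<times> real \<Rightarrow> ennreal"
  assumes [measurable]: "h \<in> borel_measurable (lborel \<Otimes>\<^sub>M lborel)"
  shows "(\<integral>\<^sup>+x. \<integral>\<^sup>+y. h (x + k * y, y) \<partial>lborel \<partial>lborel)
      = (\<integral>\<^sup>+x. \<integral>\<^sup>+y. h (x, y) \<partial>lborel \<partial>lborel)"
proof -
  have "(\<integral>\<^sup>+x. \<integral>\<^sup>+y. h (x + k * y, y) \<partial>lborel \<partial>lborel)
      = (\<integral>\<^sup>+y. \<integral>\<^sup>+x. h (x + k * y, y) \<partial>lborel \<partial>lborel)"
    by (rule lborel_pair.Fubini'[symmetric]) measurable
  also have "\<dots> = (\<integral>\<^sup>+y. \<integral>\<^sup>+x. h (x, y) \<partial>lborel \<partial>lborel)"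
  proof (rule nn_integral_cong)
    fix y :: real
    have "(\<integral>\<^sup>+x. h (x, y) \<partial>lborel) = ennreal \<bar>1\<bar> * (\<integral>\<^sup>+x. h (k * y + 1 * x, y) \<partial>lborel)"
      by (rule nn_integral_real_affine) auto
    then show "(\<integral>\<^sup>+x. h (x + k * y, y) \<partial>lborel) = (\<integral>\<^sup>+x. h (x, y) \<partial>lborel)"
      by (simp add: add.commute)
  qed
  also have "\<dots> = (\<integral>\<^sup>+x. \<integral>\<^sup>+y. h (x, y) \<partial>lborel \<partial>lborel)"
    by (rule lborel_pair.Fubini') measurable
  finally show ?thesis .
qed

lemma nn_integral_lborel_pair_shear_snd:
  fixes h :: "real \<times> real \<Rightarrow> ennreal"
  assumes [measurable]: "h \<in> borel_measurable (lborel \<Otimes>\<^sub>M lborel)"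
  shows "(\<integral>\<^sup>+x. \<integral>\<^sup>+y. h (x, y + k * x) \<partial>lborel \<partial>lborel)
      = (\<integral>\<^sup>+x. \<integral>\<^sup>+y. h (x, y) \<partial>lborel \<partial>lborel)"
proof (rule nn_integral_cong)
  fix x :: real
  have "(\<integral>\<^sup>+y. h (x, y) \<partial>lborel) = ennreal \<bar>1\<bar> * (\<integral>\<^sup>+y. h (x, k * x + 1 * y) \<partial>lborel)"
    by (rule nn_integral_real_affine) auto
  then show "(\<integral>\<^sup>+y. h (x, y + k * x) \<partial>lborel) = (\<integral>\<^sup>+y. h (x, y) \<partial>lborel)"
    by (simp add: add.commute)
qed

text \<open>A rotation through \<open>\<theta> \<noteq> \<pi>\<close> is the product of the shears with factors \<open>tan (\<theta>/2)\<close>,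
  \<open>- sin \<theta>\<close> and \<open>tan (\<theta>/2)\<close>.\<close>
lemma nn_integral_lborel_pair_rotation:
  fixes h :: "real \<times> real \<Rightarrow> ennreal" and C S :: real
  assumes [measurable]: "h \<in> borel_measurable (lborel \<Otimes>\<^sub>M lborel)"
  assumes CS: "C\<^sup>2 + S\<^sup>2 = 1" and C: "C > -1"
  shows "(\<integral>\<^sup>+x. \<integral>\<^sup>+y. h (C * x + S * y, - S * x + C * y) \<partial>lborel \<partial>lborel)
      = (\<integral>\<^sup>+x. \<integral>\<^sup>+y. h (x, y) \<partial>lborel \<partial>lborel)"
proof -
  define k1 where "k1 = S / (1 + C)"
  define k2 where "k2 = - S"
  have C_ne: "1 + C \<noteq> 0" using C by simp
  have k_prod: "k1 * k2 = C - 1"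
  proof -
    have "S\<^sup>2 = (1 - C) * (1 + C)" using CS by (simp add: algebra_simps power2_eq_square)
    then have "k1 * k2 = - ((1 - C) * (1 + C)) / (1 + C)" unfolding k1_def k2_def by (simp add: power2_eq_square)
    also have "\<dots> = C - 1" using C_ne by simp
    finally show ?thesis .
  qed
  have k1_scaled: "k1 * (1 + C) = S" unfolding k1_def using C_ne by simp
  have first_coord: "(x + k1 * y) + k1 * (y + k2 * (x + k1 * y)) = C * x + S * y" for x y
  proof -
    have "(x + k1 * y) + k1 * (y + k2 * (x + k1 * y)) = x * (1 + k1 * k2) + y * (k1 * (2 + k1 * k2))" by algebra
    also have "\<dots> = C * x + S * y" unfolding k_prod using k1_scaled by (simp add: algebra_simps)
    finally show ?thesis .
  qed
  have second_coord: "y + k2 * (x + k1 * y) = - S * x + C * y" for x y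
  proof -
    have "y + k2 * (x + k1 * y) = k2 * x + y * (1 + k1 * k2)" by algebra
    also have "\<dots> = - S * x + C * y" by (simp only: k_prod) (simp add: k2_def)
    finally show ?thesis .
  qed
  define g1 where "g1 p = h (fst p + k1 * snd p, snd p)" for p
  define g2 where "g2 p = g1 (fst p, snd p + k2 * fst p)" for p
  have [measurable]: "g1 \<in> borel_measurable (lborel \<Otimes>\<^sub>M lborel)" unfolding g1_def by measurable
  have [measurable]: "g2 \<in> borel_measurable (lborel \<Otimes>\<^sub>M lborel)" unfolding g2_def by measurable
  have "(\<integral>\<^sup>+x. \<integral>\<^sup>+y. h (C * x + S * y, - S * x + C * y) \<partial>lborel \<partial>lborel)
      = (\<integral>\<^sup>+x. \<integral>\<^sup>+y. g2 (x + k1 * y, y) \<partial>lborel \<partial>lborel)"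
  proof -
    have first_coord': "(x + k1 * y) + k1 * (- S * x + C * y) = C * x + S * y" for x y
      by (subst second_coord[where x=x and y=y, symmetric]) (rule first_coord)
    show ?thesis unfolding g2_def g1_def fst_conv snd_conv second_coord first_coord' ..
  qed
  also have "\<dots> = (\<integral>\<^sup>+x. \<integral>\<^sup>+y. g2 (x, y) \<partial>lborel \<partial>lborel)"
    by (rule nn_integral_lborel_pair_shear_fst) measurable
  also have "\<dots> = (\<integral>\<^sup>+x. \<integral>\<^sup>+y. g1 (x, y + k2 * x) \<partial>lborel \<partial>lborel)"
    unfolding g2_def by simp
  also have "\<dots> = (\<integral>\<^sup>+x. \<integral>\<^sup>+y. g1 (x, y) \<partial>lborel \<partial>lborel)"
    by (rule nn_integral_lborel_pair_shear_snd) measurable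
  also have "\<dots> = (\<integral>\<^sup>+x. \<integral>\<^sup>+y. h (x + k1 * y, y) \<partial>lborel \<partial>lborel)"
    unfolding g1_def by simp
  also have "\<dots> = (\<integral>\<^sup>+x. \<integral>\<^sup>+y. h (x, y) \<partial>lborel \<partial>lborel)"
    by (rule nn_integral_lborel_pair_shear_fst) measurable
  finally show ?thesis .
qed

section \<open>Iterated integrals over four real variables\<close>

definition nn_integral4 :: "(real \<times> real \<times> real \<times> real \<Rightarrow> ennreal) \<Rightarrow> ennreal" where
  "nn_integral4 K =
    (\<integral>\<^sup>+x1. \<integral>\<^sup>+y1. \<integral>\<^sup>+x2. \<integral>\<^sup>+y2. K (x1, y1, x2, y2) \<partial>lborel \<partial>lborel \<partial>lborel \<partial>lborel)"

abbreviation lborel4 :: "(real \<times> real \<times> real \<times> real) measure" where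
  "lborel4 \<equiv> lborel \<Otimes>\<^sub>M lborel \<Otimes>\<^sub>M lborel \<Otimes>\<^sub>M lborel"

lemma nn_integral4_rotation:
  fixes K :: "real \<times> real \<times> real \<times> real \<Rightarrow> ennreal" and C S :: real
  assumes [measurable]: "K \<in> borel_measurable lborel4"
  assumes CS: "C\<^sup>2 + S\<^sup>2 = 1" and C: "C > -1"
  shows "nn_integral4 (\<lambda>(x1, y1, x2, y2).
      K (C * x1 + S * y1, - S * x1 + C * y1, C * x2 + S * y2, - S * x2 + C * y2)) = nn_integral4 K"
proof -
  have inner: "(\<integral>\<^sup>+x2. \<integral>\<^sup>+y2. K (u, v, C * x2 + S * y2, - S * x2 + C * y2) \<partial>lborel \<partial>lborel)
     = (\<integral>\<^sup>+x2. \<integral>\<^sup>+y2. K (u, v, x2, y2) \<partial>lborel \<partial>lborel)" for u v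
    using nn_integral_lborel_pair_rotation[of "\<lambda>p. K (u, v, fst p, snd p)", OF _ CS C] by simp
  define H where "H p = (\<integral>\<^sup>+x2. \<integral>\<^sup>+y2. K (fst p, snd p, x2, y2) \<partial>lborel \<partial>lborel)" for p
  have [measurable]: "H \<in> borel_measurable (lborel \<Otimes>\<^sub>M lborel)" unfolding H_def by measurable
  have "nn_integral4 (\<lambda>(x1, y1, x2, y2). K (C * x1 + S * y1, - S * x1 + C * y1, C * x2 + S * y2, - S * x2 + C * y2))
      = (\<integral>\<^sup>+x1. \<integral>\<^sup>+y1. H (C * x1 + S * y1, - S * x1 + C * y1) \<partial>lborel \<partial>lborel)"
    unfolding nn_integral4_def H_def by (simp only: fst_conv snd_conv prod.case inner)
  also have "\<dots> = (\<integral>\<^sup>+x1. \<integral>\<^sup>+y1. H (x1, y1) \<partial>lborel \<partial>lborel)"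
    by (rule nn_integral_lborel_pair_rotation[OF _ CS C]) measurable
  also have "\<dots> = nn_integral4 K" unfolding nn_integral4_def H_def by simp
  finally show ?thesis .
qed

lemma sets_lborel_pair: "sets (lborel \<Otimes>\<^sub>M lborel) = sets (borel \<Otimes>\<^sub>M (borel::real measure))"
  by (intro sets_pair_measure_cong) simp_all

lemma sigma_finite_lborel_pair: "sigma_finite_measure (lborel \<Otimes>\<^sub>M (lborel::real measure))"
  by (intro sigma_finite_pair_measure) (simp_all add: lborel.sigma_finite_measure_axioms)

lemma nn_integral4_reorder:
  fixes F :: "real \<times> real \<times> real \<times> real \<Rightarrow> ennreal"
  assumes [measurable]: "F \<in> borel_measurable lborel4"
  shows "(\<integral>\<^sup>+x1. \<integral>\<^sup>+y2. \<integral>\<^sup>+x2. \<integral>\<^sup>+y1. F (x1, y1, x2, y2) \<partial>lborel \<partial>lborel \<partial>lborel \<partial>lborel) = nn_integral4 F"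
  unfolding nn_integral4_def
proof (rule nn_integral_cong)
  fix x1 :: real
  have "(\<integral>\<^sup>+y2. \<integral>\<^sup>+x2. \<integral>\<^sup>+y1. F (x1, y1, x2, y2) \<partial>lborel \<partial>lborel \<partial>lborel)
     = (\<integral>\<^sup>+y2. \<integral>\<^sup>+y1. \<integral>\<^sup>+x2. F (x1, y1, x2, y2) \<partial>lborel \<partial>lborel \<partial>lborel)"
  proof (rule nn_integral_cong)
    fix y2 :: real
    show "(\<integral>\<^sup>+x2. \<integral>\<^sup>+y1. F (x1, y1, x2, y2) \<partial>lborel \<partial>lborel)
        = (\<integral>\<^sup>+y1. \<integral>\<^sup>+x2. F (x1, y1, x2, y2) \<partial>lborel \<partial>lborel)"
      by (rule lborel_pair.Fubini') measurable
  qed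
  also have "\<dots> = (\<integral>\<^sup>+y1. \<integral>\<^sup>+y2. \<integral>\<^sup>+x2. F (x1, y1, x2, y2) \<partial>lborel \<partial>lborel \<partial>lborel)"
    by (rule lborel_pair.Fubini') measurable
  also have "\<dots> = (\<integral>\<^sup>+y1. \<integral>\<^sup>+x2. \<integral>\<^sup>+y2. F (x1, y1, x2, y2) \<partial>lborel \<partial>lborel \<partial>lborel)"
  proof (rule nn_integral_cong)
    fix y1 :: real
    show "(\<integral>\<^sup>+y2. \<integral>\<^sup>+x2. F (x1, y1, x2, y2) \<partial>lborel \<partial>lborel)
        = (\<integral>\<^sup>+x2. \<integral>\<^sup>+y2. F (x1, y1, x2, y2) \<partial>lborel \<partial>lborel)"
      by (rule lborel_pair.Fubini') measurable
  qed
  finally show "(\<integral>\<^sup>+y2. \<integral>\<^sup>+x2. \<integral>\<^sup>+y1. F (x1, y1, x2, y2) \<partial>lborel \<partial>lborel \<partial>lborel)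
     = (\<integral>\<^sup>+y1. \<integral>\<^sup>+x2. \<integral>\<^sup>+y2. F (x1, y1, x2, y2) \<partial>lborel \<partial>lborel \<partial>lborel)" .
qed

lemma nn_integral_lborel_pair_pair:
  fixes F :: "(real \<times> real) \<times> (real \<times> real) \<Rightarrow> ennreal"
  assumes [measurable]: "F \<in> borel_measurable ((lborel \<Otimes>\<^sub>M lborel) \<Otimes>\<^sub>M (lborel \<Otimes>\<^sub>M lborel))"
  shows "(\<integral>\<^sup>+w. F w \<partial>((lborel \<Otimes>\<^sub>M lborel) \<Otimes>\<^sub>M (lborel \<Otimes>\<^sub>M lborel)))
    = (\<integral>\<^sup>+a. \<integral>\<^sup>+b. \<integral>\<^sup>+c. \<integral>\<^sup>+d. F ((a, b), (c, d)) \<partial>lborel \<partial>lborel \<partial>lborel \<partial>lborel)"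
proof -
  have "(\<integral>\<^sup>+w. F w \<partial>((lborel \<Otimes>\<^sub>M lborel) \<Otimes>\<^sub>M (lborel \<Otimes>\<^sub>M lborel)))
      = (\<integral>\<^sup>+p. \<integral>\<^sup>+q. F (p, q) \<partial>(lborel \<Otimes>\<^sub>M lborel) \<partial>(lborel \<Otimes>\<^sub>M lborel))"
    by (rule sigma_finite_measure.nn_integral_fst[OF sigma_finite_lborel_pair, symmetric]) measurable
  also have "\<dots> = (\<integral>\<^sup>+p. \<integral>\<^sup>+c. \<integral>\<^sup>+d. F (p, (c, d)) \<partial>lborel \<partial>lborel \<partial>(lborel \<Otimes>\<^sub>M lborel))"
    by (intro nn_integral_cong lborel.nn_integral_fst[symmetric] measurable_Pair2[OF assms]) simp
  also have "\<dots> = (\<integral>\<^sup>+a. \<integral>\<^sup>+b. \<integral>\<^sup>+c. \<integral>\<^sup>+d. F ((a, b), (c, d)) \<partial>lborel \<partial>lborel \<partial>lborel \<partial>lborel)"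
    by (rule lborel.nn_integral_fst[symmetric]) measurable
  finally show ?thesis .
qed

lemma nn_integral_indep_pairs:
  fixes M :: "'a measure" and X1 X2 Y1 Y2 :: "'a \<Rightarrow> real" and f1 f2 :: "real \<times> real \<Rightarrow> ennreal"
    and g :: "real \<times> real \<times> real \<times> real \<Rightarrow> ennreal"
  assumes "prob_space M"
    and D1: "distributed M (lborel \<Otimes>\<^sub>M lborel) (\<lambda>\<omega>. (X1 \<omega>, Y2 \<omega>)) f1"
    and D2: "distributed M (lborel \<Otimes>\<^sub>M lborel) (\<lambda>\<omega>. (X2 \<omega>, Y1 \<omega>)) f2"
    and indep: "prob_space.indep_var M (borel \<Otimes>\<^sub>M borel) (\<lambda>\<omega>. (X1 \<omega>, Y2 \<omega>))
           (borel \<Otimes>\<^sub>M borel) (\<lambda>\<omega>. (X2 \<omega>, Y1 \<omega>))"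
    and [measurable]: "g \<in> borel_measurable lborel4"
  shows "(\<integral>\<^sup>+\<omega>. g (X1 \<omega>, Y1 \<omega>, X2 \<omega>, Y2 \<omega>) \<partial>M)
       = nn_integral4 (\<lambda>(x1, y1, x2, y2). f1 (x1, y2) * f2 (x2, y1) * g (x1, y1, x2, y2))"
proof -
  interpret prob_space M by fact
  have [measurable]: "f1 \<in> borel_measurable (lborel \<Otimes>\<^sub>M lborel)" "f2 \<in> borel_measurable (lborel \<Otimes>\<^sub>M lborel)"
    using D1 D2 by (simp_all add: distributed_borel_measurable)
  have "indep_var (lborel \<Otimes>\<^sub>M lborel) (\<lambda>\<omega>. (X1 \<omega>, Y2 \<omega>)) (lborel \<Otimes>\<^sub>M lborel) (\<lambda>\<omega>. (X2 \<omega>, Y1 \<omega>))"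
    using indep unfolding indep_var_eq
    by (simp add: sets_lborel_pair measurable_cong_sets[OF refl sets_lborel_pair])
  then have joint: "distributed M ((lborel \<Otimes>\<^sub>M lborel) \<Otimes>\<^sub>M (lborel \<Otimes>\<^sub>M lborel))
      (\<lambda>\<omega>. ((X1 \<omega>, Y2 \<omega>), (X2 \<omega>, Y1 \<omega>))) (\<lambda>(p, q). f1 p * f2 q)"
    by (intro distributed_joint_indep sigma_finite_lborel_pair D1 D2)
  define G where "G w = g (fst (fst w), snd (snd w), fst (snd w), snd (fst w))"
    for w :: "(real \<times> real) \<times> (real \<times> real)"
  have [measurable]: "G \<in> borel_measurable ((lborel \<Otimes>\<^sub>M lborel) \<Otimes>\<^sub>M (lborel \<Otimes>\<^sub>M lborel))"
    unfolding G_def by measurable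
  have "(\<integral>\<^sup>+\<omega>. g (X1 \<omega>, Y1 \<omega>, X2 \<omega>, Y2 \<omega>) \<partial>M)
      = (\<integral>\<^sup>+\<omega>. G ((X1 \<omega>, Y2 \<omega>), (X2 \<omega>, Y1 \<omega>)) \<partial>M)"
    unfolding G_def by simp
  also have "\<dots> = (\<integral>\<^sup>+w. (\<lambda>(p, q). f1 p * f2 q) w * G w \<partial>((lborel \<Otimes>\<^sub>M lborel) \<Otimes>\<^sub>M (lborel \<Otimes>\<^sub>M lborel)))"
    by (rule distributed_nn_integral[OF joint, symmetric]) measurable
  also have "\<dots> = (\<integral>\<^sup>+x1. \<integral>\<^sup>+y2. \<integral>\<^sup>+x2. \<integral>\<^sup>+y1. f1 (x1, y2) * f2 (x2, y1) * g (x1, y1, x2, y2)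
      \<partial>lborel \<partial>lborel \<partial>lborel \<partial>lborel)"
    by (subst nn_integral_lborel_pair_pair) (simp_all add: G_def)
  also have "\<dots> = nn_integral4 (\<lambda>(x1, y1, x2, y2). f1 (x1, y2) * f2 (x2, y1) * g (x1, y1, x2, y2))"
    by (subst nn_integral4_reorder[symmetric]) simp_all
  finally show ?thesis .
qed

lemma nn_integral4_cmult:
  fixes F :: "real \<times> real \<times> real \<times> real \<Rightarrow> ennreal"
  assumes [measurable]: "F \<in> borel_measurable lborel4"
  shows "nn_integral4 (\<lambda>w. c * F w) = c * nn_integral4 F"
  unfolding nn_integral4_def by (simp add: nn_integral_cmult)

lemma nn_integral4_swap:
  fixes \<Phi> :: "real \<Rightarrow> real \<times> real \<times> real \<times> real \<Rightarrow> ennreal"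
  assumes [measurable]: "case_prod \<Phi> \<in> borel_measurable (lborel \<Otimes>\<^sub>M lborel4)"
  shows "(\<integral>\<^sup>+t. nn_integral4 (\<Phi> t) \<partial>lborel) = nn_integral4 (\<lambda>w. \<integral>\<^sup>+t. \<Phi> t w \<partial>lborel)"
  unfolding nn_integral4_def
proof -
  have "(\<integral>\<^sup>+t. \<integral>\<^sup>+x1. \<integral>\<^sup>+y1. \<integral>\<^sup>+x2. \<integral>\<^sup>+y2. \<Phi> t (x1, y1, x2, y2) \<partial>lborel \<partial>lborel \<partial>lborel \<partial>lborel \<partial>lborel)
     = (\<integral>\<^sup>+x1. \<integral>\<^sup>+t. \<integral>\<^sup>+y1. \<integral>\<^sup>+x2. \<integral>\<^sup>+y2. \<Phi> t (x1, y1, x2, y2) \<partial>lborel \<partial>lborel \<partial>lborel \<partial>lborel \<partial>lborel)"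
    by (rule lborel_pair.Fubini') measurable
  also have "\<dots> = (\<integral>\<^sup>+x1. \<integral>\<^sup>+y1. \<integral>\<^sup>+t. \<integral>\<^sup>+x2. \<integral>\<^sup>+y2. \<Phi> t (x1, y1, x2, y2) \<partial>lborel \<partial>lborel \<partial>lborel \<partial>lborel \<partial>lborel)"
    by (intro nn_integral_cong lborel_pair.Fubini') measurable
  also have "\<dots> = (\<integral>\<^sup>+x1. \<integral>\<^sup>+y1. \<integral>\<^sup>+x2. \<integral>\<^sup>+t. \<integral>\<^sup>+y2. \<Phi> t (x1, y1, x2, y2) \<partial>lborel \<partial>lborel \<partial>lborel \<partial>lborel \<partial>lborel)"
    by (intro nn_integral_cong lborel_pair.Fubini') measurable
  also have "\<dots> = (\<integral>\<^sup>+x1. \<integral>\<^sup>+y1. \<integral>\<^sup>+x2. \<integral>\<^sup>+y2. \<integral>\<^sup>+t. \<Phi> t (x1, y1, x2, y2) \<partial>lborel \<partial>lborel \<partial>lborel \<partial>lborel \<partial>lborel)"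
    by (intro nn_integral_cong lborel_pair.Fubini') measurable
  finally show "(\<integral>\<^sup>+t. \<integral>\<^sup>+x1. \<integral>\<^sup>+y1. \<integral>\<^sup>+x2. \<integral>\<^sup>+y2. \<Phi> t (x1, y1, x2, y2) \<partial>lborel \<partial>lborel \<partial>lborel \<partial>lborel \<partial>lborel)
     = (\<integral>\<^sup>+x1. \<integral>\<^sup>+y1. \<integral>\<^sup>+x2. \<integral>\<^sup>+y2. \<integral>\<^sup>+t. \<Phi> t (x1, y1, x2, y2) \<partial>lborel \<partial>lborel \<partial>lborel \<partial>lborel \<partial>lborel)" .
qed

lemma nn_integral4_cong_off_axes:
  fixes F G :: "real \<times> real \<times> real \<times> real \<Rightarrow> ennreal"
  assumes "\<And>x1 y1 x2 y2. y1 \<noteq> 0 \<Longrightarrow> y2 \<noteq> 0 \<Longrightarrow> F (x1, y1, x2, y2) = G (x1, y1, x2, y2)"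
  shows "nn_integral4 F = nn_integral4 G"
  unfolding nn_integral4_def
proof (rule nn_integral_cong)
  fix x1
  have inner: "(\<integral>\<^sup>+y2. F (x1, y1, x2, y2) \<partial>lborel) = (\<integral>\<^sup>+y2. G (x1, y1, x2, y2) \<partial>lborel)"
    if "y1 \<noteq> 0" for y1 x2
    by (rule nn_integral_cong_AE[OF eventually_mono[OF AE_lborel_singleton[of 0]]]) (simp add: assms that)
  show "(\<integral>\<^sup>+y1. \<integral>\<^sup>+x2. \<integral>\<^sup>+y2. F (x1, y1, x2, y2) \<partial>lborel \<partial>lborel \<partial>lborel)
      = (\<integral>\<^sup>+y1. \<integral>\<^sup>+x2. \<integral>\<^sup>+y2. G (x1, y1, x2, y2) \<partial>lborel \<partial>lborel \<partial>lborel)"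
    by (rule nn_integral_cong_AE[OF eventually_mono[OF AE_lborel_singleton[of 0]]]) (simp add: inner)
qed

section \<open>The pair of binormal densities\<close>

lemma binormal_density_nonneg:
  "0 \<le> s11 * s22 - s12\<^sup>2 \<Longrightarrow> 0 \<le> binormal_density s11 s12 s22 p"
  by (cases p) (simp add: binormal_density_def Let_def)

lemma binormal_density_opposite_product:
  "binormal_density 1 \<rho> 1 (x1, y2) * binormal_density 1 (- \<rho>) 1 (x2, y1)
   = exp (- ((x1\<^sup>2 + y1\<^sup>2) + (x2\<^sup>2 + y2\<^sup>2) - 2 * \<rho> * (x1 * y2 - x2 * y1)) / (2 * (1 - \<rho>\<^sup>2)))
     / (2 * pi * sqrt (1 - \<rho>\<^sup>2))\<^sup>2"
proof -
  define d where "d = 1 - \<rho>\<^sup>2"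
  have "binormal_density 1 \<rho> 1 (x1, y2) = exp (- (x1\<^sup>2 - 2 * \<rho> * x1 * y2 + y2\<^sup>2) / (2 * d)) / (2 * pi * sqrt d)"
    and "binormal_density 1 (- \<rho>) 1 (x2, y1) = exp (- (x2\<^sup>2 + 2 * \<rho> * x2 * y1 + y1\<^sup>2) / (2 * d)) / (2 * pi * sqrt d)"
    by (simp_all add: binormal_density_def d_def)
  moreover have "- (x1\<^sup>2 - 2 * \<rho> * x1 * y2 + y2\<^sup>2) / (2 * d) + - (x2\<^sup>2 + 2 * \<rho> * x2 * y1 + y1\<^sup>2) / (2 * d)
      = - ((x1\<^sup>2 + y1\<^sup>2) + (x2\<^sup>2 + y2\<^sup>2) - 2 * \<rho> * (x1 * y2 - x2 * y1)) / (2 * d)"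
    unfolding add_divide_distrib[symmetric] by (simp add: algebra_simps)
  ultimately show ?thesis
    by (simp add: d_def power2_eq_square exp_add[symmetric])
qed

definition binormal_pair_density :: "real \<Rightarrow> real \<times> real \<times> real \<times> real \<Rightarrow> ennreal" where
  "binormal_pair_density \<rho> = (\<lambda>(x1, y1, x2, y2).
     ennreal (binormal_density 1 \<rho> 1 (x1, y2) * binormal_density 1 (- \<rho>) 1 (x2, y1)))"

lemma borel_measurable_binormal_density [measurable]:
  "binormal_density s11 s12 s22 \<in> borel_measurable (lborel \<Otimes>\<^sub>M lborel)"
  unfolding binormal_density_def Let_def by measurable

lemma borel_measurable_binormal_pair_density [measurable]:
  "binormal_pair_density \<rho> \<in> borel_measurable lborel4"
  unfolding binormal_pair_density_def by measurable

text \<open>The exponent only involves \<open>|p1|\<^sup>2 + |p2|\<^sup>2\<close> and \<open>det (p1, p2)\<close> for \<open>pi = (xi, yi)\<close>.\<close>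
lemma binormal_pair_density_rotation:
  assumes "C\<^sup>2 + S\<^sup>2 = 1"
  shows "binormal_pair_density \<rho> (C * x1 + S * y1, - S * x1 + C * y1, C * x2 + S * y2, - S * x2 + C * y2)
    = binormal_pair_density \<rho> (x1, y1, x2, y2)"
proof -
  have norm: "(C * x + S * y)\<^sup>2 + (- S * x + C * y)\<^sup>2 = (C\<^sup>2 + S\<^sup>2) * (x\<^sup>2 + y\<^sup>2)" for x y
    by algebra
  have det: "(C * x1 + S * y1) * (- S * x2 + C * y2) - (C * x2 + S * y2) * (- S * x1 + C * y1)
      = (C\<^sup>2 + S\<^sup>2) * (x1 * y2 - x2 * y1)"
    by algebra
  show ?thesis
    unfolding binormal_pair_density_def prod.case binormal_density_opposite_product norm det assms
    by simp
qed

lemma nn_integral_binormal_pairs: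
  fixes M :: "'a measure" and X1 X2 Y1 Y2 :: "'a \<Rightarrow> real"
  assumes "prob_space M" and "-1 < \<rho>" and "\<rho> < 1"
    and "distributed M (lborel \<Otimes>\<^sub>M lborel) (\<lambda>\<omega>. (X1 \<omega>, Y2 \<omega>))
           (\<lambda>p. ennreal (binormal_density 1 \<rho> 1 p))"
    and "distributed M (lborel \<Otimes>\<^sub>M lborel) (\<lambda>\<omega>. (X2 \<omega>, Y1 \<omega>))
           (\<lambda>p. ennreal (binormal_density 1 (-\<rho>) 1 p))"
    and "prob_space.indep_var M (borel \<Otimes>\<^sub>M borel) (\<lambda>\<omega>. (X1 \<omega>, Y2 \<omega>))
           (borel \<Otimes>\<^sub>M borel) (\<lambda>\<omega>. (X2 \<omega>, Y1 \<omega>))"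
    and "g \<in> borel_measurable lborel4"
  shows "(\<integral>\<^sup>+\<omega>. g (X1 \<omega>, Y1 \<omega>, X2 \<omega>, Y2 \<omega>) \<partial>M) = nn_integral4 (\<lambda>w. binormal_pair_density \<rho> w * g w)"
proof -
  have "\<rho>\<^sup>2 < 1" using assms(2,3) by (simp add: abs_square_less_1)
  then have "0 \<le> binormal_density 1 \<rho> 1 p" "0 \<le> binormal_density 1 (- \<rho>) 1 p" for p
    by (simp_all add: binormal_density_nonneg)
  then show ?thesis
    using nn_integral_indep_pairs[OF assms(1,4-7)]
    by (simp add: binormal_pair_density_def case_prod_beta' ennreal_mult)
qed

section \<open>Averaging over rotations\<close>

text \<open>Rotating both planes through \<open>arctan \<tau>\<close> turns each ratio \<open>x / y\<close> into \<open>moebius_rot y x \<tau>\<close>.\<close>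
lemma nn_integral4_ratio_moebius_rot:
  fixes dens :: "real \<times> real \<times> real \<times> real \<Rightarrow> ennreal" and f :: "real \<Rightarrow> real \<Rightarrow> ennreal"
    and \<tau> :: real
  assumes [measurable]: "dens \<in> borel_measurable lborel4" "case_prod f \<in> borel_measurable (borel \<Otimes>\<^sub>M borel)"
    and rotation: "\<And>C S x1 y1 x2 y2. C\<^sup>2 + S\<^sup>2 = 1 \<Longrightarrow>
      dens (C * x1 + S * y1, - S * x1 + C * y1, C * x2 + S * y2, - S * x2 + C * y2) = dens (x1, y1, x2, y2)"
  shows "nn_integral4 (\<lambda>(x1, y1, x2, y2). dens (x1, y1, x2, y2) * f (x1 / y1) (x2 / y2))
    = nn_integral4 (\<lambda>(x1, y1, x2, y2). dens (x1, y1, x2, y2) * f (moebius_rot y1 x1 \<tau>) (moebius_rot y2 x2 \<tau>))"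
proof -
  define r where "r = sqrt (1 + \<tau>\<^sup>2)"
  define C where "C = 1 / r"
  define S where "S = \<tau> / r"
  have "1 + \<tau>\<^sup>2 > 0" by (simp add: add_pos_nonneg)
  then have r: "r > 0" "r\<^sup>2 = 1 + \<tau>\<^sup>2" unfolding r_def by simp_all
  then have CS: "C\<^sup>2 + S\<^sup>2 = 1"
    using \<open>1 + \<tau>\<^sup>2 > 0\<close> by (simp add: C_def S_def power_divide add_divide_distrib[symmetric])
  have "C > -1" using \<open>r > 0\<close> unfolding C_def by (smt (verit) divide_pos_pos)
  have ratio: "(C * x + S * y) / (- S * x + C * y) = moebius_rot y x \<tau>" for x y
    using r by (cases "y - \<tau> * x = 0") (simp_all add: C_def S_def moebius_rot_def field_simps)
  have "nn_integral4 (\<lambda>(x1, y1, x2, y2). dens (x1, y1, x2, y2) * f (x1 / y1) (x2 / y2))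
    = nn_integral4 (\<lambda>(x1, y1, x2, y2).
        dens (C * x1 + S * y1, - S * x1 + C * y1, C * x2 + S * y2, - S * x2 + C * y2)
        * f ((C * x1 + S * y1) / (- S * x1 + C * y1)) ((C * x2 + S * y2) / (- S * x2 + C * y2)))"
  proof -
    have "(\<lambda>(x1, y1, x2, y2). dens (x1, y1, x2, y2) * f (x1 / y1) (x2 / y2)) \<in> borel_measurable lborel4"
      by measurable
    from nn_integral4_rotation[OF this CS \<open>C > -1\<close>] show ?thesis by (simp only: prod.case)
  qed
  then show ?thesis by (simp only: rotation[OF CS] ratio)
qed

lemma nn_integral4_convex_ratio_le:
  fixes dens :: "real \<times> real \<times> real \<times> real \<Rightarrow> ennreal"
  assumes [measurable]: "dens \<in> borel_measurable lborel4" and total: "nn_integral4 dens = 1"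
    and rotation: "\<And>C S x1 y1 x2 y2. C\<^sup>2 + S\<^sup>2 = 1 \<Longrightarrow>
      dens (C * x1 + S * y1, - S * x1 + C * y1, C * x2 + S * y2, - S * x2 + C * y2) = dens (x1, y1, x2, y2)"
    and a: "a \<ge> 0" and b: "b \<ge> 0" and ab: "a + b = 1"
  shows "nn_integral4 (\<lambda>(x1, y1, x2, y2). dens (x1, y1, x2, y2) * indicator {..z} (a * (x1 / y1) + b * (x2 / y2)))
    = ennreal (cauchy_cdf z)"
proof -
  define f where "f u v = (indicator {..z} (a * u + b * v) :: ennreal)" for u v
  define G where "G \<tau> = (\<lambda>(x1, y1, x2, y2). dens (x1, y1, x2, y2) * f (moebius_rot y1 x1 \<tau>) (moebius_rot y2 x2 \<tau>))"
    for \<tau>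
  have [measurable]: "case_prod f \<in> borel_measurable (borel \<Otimes>\<^sub>M borel)" unfolding f_def by measurable
  have [measurable]: "case_prod G \<in> borel_measurable (lborel \<Otimes>\<^sub>M lborel4)"
    unfolding G_def moebius_rot_def by measurable
  have average: "(\<integral>\<^sup>+\<tau>. ennreal (std_cauchy_density \<tau>) * G \<tau> (x1, y1, x2, y2) \<partial>lborel)
      = ennreal (cauchy_cdf z) * dens (x1, y1, x2, y2)" if "y1 \<noteq> 0" "y2 \<noteq> 0" for x1 y1 x2 y2
  proof -
    have "(\<integral>\<^sup>+\<tau>. ennreal (std_cauchy_density \<tau>) * G \<tau> (x1, y1, x2, y2) \<partial>lborel)
        = dens (x1, y1, x2, y2) * emeasure std_cauchy {\<tau>. a * moebius_rot y1 x1 \<tau> + b * moebius_rot y2 x2 \<tau> \<le> z}"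
      by (simp add: G_def f_def emeasure_density nn_integral_cmult[symmetric] ac_simps)
        (simp add: indicator_def)
    also have "\<dots> = dens (x1, y1, x2, y2) * ennreal (cauchy_cdf z)"
      using that by (subst emeasure_std_cauchy_convex_two_moebius_rot_le[OF a b ab]) auto
    finally show ?thesis by (simp add: mult.commute)
  qed
  have "(\<integral>\<^sup>+\<tau>. ennreal (std_cauchy_density \<tau>) \<partial>lborel) = 1"
    using prob_space.emeasure_space_1[OF prob_space_std_cauchy] by (simp add: emeasure_density)
  then have "nn_integral4 (\<lambda>(x1, y1, x2, y2). dens (x1, y1, x2, y2) * f (x1 / y1) (x2 / y2))
      = (\<integral>\<^sup>+\<tau>. ennreal (std_cauchy_density \<tau>) * nn_integral4 (G \<tau>) \<partial>lborel)"
    using nn_integral4_ratio_moebius_rot[OF _ _ rotation] by (simp add: G_def nn_integral_multc)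
  also have "\<dots> = (\<integral>\<^sup>+\<tau>. nn_integral4 (\<lambda>w. ennreal (std_cauchy_density \<tau>) * G \<tau> w) \<partial>lborel)"
    by (intro nn_integral_cong nn_integral4_cmult[symmetric]) measurable
  also have "\<dots> = nn_integral4 (\<lambda>w. \<integral>\<^sup>+\<tau>. ennreal (std_cauchy_density \<tau>) * G \<tau> w \<partial>lborel)"
    by (rule nn_integral4_swap) measurable
  also have "\<dots> = nn_integral4 (\<lambda>w. ennreal (cauchy_cdf z) * dens w)"
    by (rule nn_integral4_cong_off_axes) (simp add: average)
  also have "\<dots> = ennreal (cauchy_cdf z)" by (simp add: nn_integral4_cmult total)
  finally show ?thesis by (simp add: f_def)
qed

theorem mainTheorem2:
  fixes M :: "'a measure" and X1 X2 Y1 Y2 :: "'a \<Rightarrow> real" and \<rho> w1 w2 :: real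
  assumes "prob_space M"
    and "-1 < \<rho>" and "\<rho> < 1"
    and "distributed M (lborel \<Otimes>\<^sub>M lborel) (\<lambda>\<omega>. (X1 \<omega>, Y2 \<omega>))
           (\<lambda>p. ennreal (binormal_density 1 \<rho> 1 p))"
    and "distributed M (lborel \<Otimes>\<^sub>M lborel) (\<lambda>\<omega>. (X2 \<omega>, Y1 \<omega>))
           (\<lambda>p. ennreal (binormal_density 1 (-\<rho>) 1 p))"
    and "prob_space.indep_var M (borel \<Otimes>\<^sub>M borel) (\<lambda>\<omega>. (X1 \<omega>, Y2 \<omega>))
           (borel \<Otimes>\<^sub>M borel) (\<lambda>\<omega>. (X2 \<omega>, Y1 \<omega>))"
    and "w1 \<ge> 0" and "w2 \<ge> 0" and "w1 + w2 = 1"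
  shows "distributed M lborel (\<lambda>\<omega>. w1 * (X1 \<omega> / Y1 \<omega>) + w2 * (X2 \<omega> / Y2 \<omega>))
           (\<lambda>z. ennreal (std_cauchy_density z))"
proof -
  interpret prob_space M by fact
  define Z where "Z \<omega> = w1 * (X1 \<omega> / Y1 \<omega>) + w2 * (X2 \<omega> / Y2 \<omega>)" for \<omega>
  note expectation = nn_integral_binormal_pairs[OF assms(1-6)]
  have total: "nn_integral4 (binormal_pair_density \<rho>) = 1"
    using expectation[of "\<lambda>_. 1"] emeasure_space_1 by simp
  have [measurable]: "X1 \<in> borel_measurable M" "Y2 \<in> borel_measurable M"
      "X2 \<in> borel_measurable M" "Y1 \<in> borel_measurable M"
    using assms(4,5)[THEN distributed_measurable] by (simp_all add: measurable_pair_iff comp_def)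
  then have [measurable]: "Z \<in> borel_measurable M" unfolding Z_def by measurable
  have "emeasure (distr M lborel Z) {..z} = ennreal (cauchy_cdf z)" for z
  proof -
    have "emeasure (distr M lborel Z) {..z} = (\<integral>\<^sup>+\<omega>. indicator {..z} (Z \<omega>) \<partial>M)"
      by (simp add: nn_integral_distr flip: nn_integral_indicator)
    also have "\<dots> = nn_integral4 (\<lambda>(x1, y1, x2, y2). binormal_pair_density \<rho> (x1, y1, x2, y2)
        * indicator {..z} (w1 * (x1 / y1) + w2 * (x2 / y2)))"
      using expectation[of "\<lambda>(x1, y1, x2, y2). indicator {..z} (w1 * (x1 / y1) + w2 * (x2 / y2))"]
      by (simp add: Z_def case_prod_beta')
    also have "\<dots> = ennreal (cauchy_cdf z)"
      using binormal_pair_density_rotation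
      by (intro nn_integral4_convex_ratio_le total assms(7-9)) auto
    finally show ?thesis .
  qed
  then have "distr M lborel Z = std_cauchy"
    by (intro std_cauchy_eqI) (simp_all add: real_distribution_def real_distribution_axioms_def prob_space_distr)
  then show ?thesis
    unfolding distributed_def Z_def[symmetric] by simp
qed

end
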